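(* Consider the following ten pairs of integer sequences $(\boldsymbol{a};\boldsymbol{b})$: $((2,2,1,1);(2,0,0,0,0))$, $((2,2,2);(2,1,0,0))$, $((2,2,2,1);(2,1,1,0,0))$, $((2,2,2,2);(3,1,0,0,0))$, $((2,2,2,2);(2,2,1,0,0))$, $((2,2,2,2);(2,1,1,1,1))$, $((3,2,2);(3,1,0,0))$, $((3,3);(3,1,0))$, $((3,3,2);(3,2,1,0))$, $((3,3,2);(4,0,0,0))$. For each such pair, with $\boldsymbol{a}=(a_1,\dots,a_s)$ and $\boldsymbol{b}=(b_1,\dots,b_{s+1})$, if there exists a minimal monad on $\mathbb{P}^3$ of the form $$\bigoplus_{i=1}^{s}\mathcal{O}(-a_i-1)\xrightarrow{\alpha}\bigoplus_{j=1}^{s+1}\big(\mathcal{O}(b_j)\oplus\mathcal{O}(-b_j-1)\big)\xrightarrow{\beta}\bigoplus_{i=1}^{s}\mathcal{O}(a_i)$$ whose cohomology is a rank $2$ vector bundle, then this cohomology is not a stable bundle.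
   Context: Work on $\mathbb{P}^3$ over an algebraically closed field; $\mathcal{O}=\mathcal{O}_{\mathbb{P}^3}$. A monad is a complex $\mathcal{C}\xrightarrow{\alpha}\mathcal{B}\xrightarrow{\beta}\mathcal{A}$ of vector bundles with $\alpha$ injective and $\beta$ surjective, with cohomology $\ker\beta/\operatorname{Im}\alpha$; it is minimal if no entry of the matrices of $\alpha,\beta$ (homogeneous forms) is a nonzero constant. A rank 2 bundle with $c_1=-1$ (which is the first Chern class of the cohomology of any such monad) is stable iff it has no nonzero global sections. *)

theory Defs
  imports Main "HOL-Library.Poly_Mapping" "HOL-Computational_Algebra.Polynomial"
begin

text \<open>Polynomials in the four homogeneous coordinates x_0,...,x_3 of P^3 over a field 'k:
  a polynomial is a finitely supported map from monomials (exponent vectors nat =>0 nat)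
  to coefficients; multiplication is the Poly_Mapping convolution.\<close>

type_synonym 'k mpoly = "(nat \<Rightarrow>\<^sub>0 nat) \<Rightarrow>\<^sub>0 'k"

definition alg_closed_field :: "'k::field itself \<Rightarrow> bool" where
  "alg_closed_field _ \<longleftrightarrow> (\<forall>p :: 'k poly. degree p > 0 \<longrightarrow> (\<exists>x. poly p x = 0))"

definition homog :: "int \<Rightarrow> ('k::zero) mpoly \<Rightarrow> bool" where
  "homog d p \<longleftrightarrow> (\<forall>m \<in> Poly_Mapping.keys p. Poly_Mapping.keys (m::nat \<Rightarrow>\<^sub>0 nat) \<subseteq> {..<4::nat} \<and> int (\<Sum>v<4. Poly_Mapping.lookup m v) = d)"

definition is_const :: "'k::zero mpoly \<Rightarrow> bool" where
  "is_const p \<longleftrightarrow> Poly_Mapping.keys p \<subseteq> {0}"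

definition eval_mpoly :: "'k::comm_semiring_1 mpoly \<Rightarrow> (nat \<Rightarrow> 'k) \<Rightarrow> 'k" where
  "eval_mpoly p x = (\<Sum>m\<in>Poly_Mapping.keys p. Poly_Mapping.lookup p m * (\<Prod>v<4. x v ^ Poly_Mapping.lookup m v))"

text \<open>A morphism  (+)_j O(src!j) --> (+)_i O(tgt!i)  is a matrix M (row i, column j)
  whose (i,j) entry is a form of degree tgt!i - src!j.\<close>
definition sheaf_map :: "int list \<Rightarrow> int list \<Rightarrow> (nat \<Rightarrow> nat \<Rightarrow> 'k::zero mpoly) \<Rightarrow> bool" where
  "sheaf_map src tgt M \<longleftrightarrow> (\<forall>i<length tgt. \<forall>j<length src. homog (tgt!i - src!j) (M i j))"

definition minimal_map :: "int list \<Rightarrow> int list \<Rightarrow> (nat \<Rightarrow> nat \<Rightarrow> 'k::zero mpoly) \<Rightarrow> bool" where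
  "minimal_map src tgt M \<longleftrightarrow>
     (\<forall>i<length tgt. \<forall>j<length src. is_const (M i j) \<longrightarrow> M i j = 0)"

definition point_P3 :: "(nat \<Rightarrow> 'k::zero) \<Rightarrow> bool" where
  "point_P3 x \<longleftrightarrow> (\<exists>v<4. x v \<noteq> 0)"

definition fiber_injective :: "int list \<Rightarrow> int list \<Rightarrow> (nat \<Rightarrow> nat \<Rightarrow> 'k::field mpoly) \<Rightarrow> bool" where
  "fiber_injective src tgt M \<longleftrightarrow>
     (\<forall>x. point_P3 x \<longrightarrow> (\<forall>c :: nat \<Rightarrow> 'k.
        (\<forall>i<length tgt. (\<Sum>j<length src. eval_mpoly (M i j) x * c j) = 0)
        \<longrightarrow> (\<forall>j<length src. c j = 0)))"

definition fiber_surjective :: "int list \<Rightarrow> int list \<Rightarrow> (nat \<Rightarrow> nat \<Rightarrow> 'k::field mpoly) \<Rightarrow> bool" where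
  "fiber_surjective src tgt M \<longleftrightarrow>
     (\<forall>x. point_P3 x \<longrightarrow> (\<forall>y :: nat \<Rightarrow> 'k. \<exists>c :: nat \<Rightarrow> 'k.
        \<forall>i<length tgt. (\<Sum>j<length src. eval_mpoly (M i j) x * c j) = y i))"

definition comp_zero :: "int list \<Rightarrow> int list \<Rightarrow> int list
     \<Rightarrow> (nat \<Rightarrow> nat \<Rightarrow> 'k::field mpoly) \<Rightarrow> (nat \<Rightarrow> nat \<Rightarrow> 'k mpoly) \<Rightarrow> bool" where
  "comp_zero C B A \<alpha> \<beta> \<longleftrightarrow>
     (\<forall>i<length A. \<forall>k<length C. (\<Sum>j<length B. \<beta> i j * \<alpha> j k) = 0)"

text \<open>Twists of the summands of the monad
  (+)_i O(-a_i-1) --> (+)_j (O(b_j) (+) O(-b_j-1)) --> (+)_i O(a_i).\<close>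
definition twC :: "int list \<Rightarrow> int list" where "twC a = map (\<lambda>t. - t - 1) a"
definition twB :: "int list \<Rightarrow> int list" where "twB b = b @ map (\<lambda>t. - t - 1) b"
definition twA :: "int list \<Rightarrow> int list" where "twA a = a"

text \<open>A minimal monad of the given shape whose cohomology is a (rank 2) vector bundle:
  alpha fibrewise injective, beta fibrewise surjective, beta o alpha = 0.\<close>
definition minimal_monad :: "int list \<Rightarrow> int list
     \<Rightarrow> (nat \<Rightarrow> nat \<Rightarrow> 'k::field mpoly) \<Rightarrow> (nat \<Rightarrow> nat \<Rightarrow> 'k mpoly) \<Rightarrow> bool" where
  "minimal_monad a b \<alpha> \<beta> \<longleftrightarrow>
     length b = length a + 1 \<and>
     sheaf_map (twC a) (twB b) \<alpha> \<and> sheaf_map (twB b) (twA a) \<beta> \<and>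
     minimal_map (twC a) (twB b) \<alpha> \<and> minimal_map (twB b) (twA a) \<beta> \<and>
     comp_zero (twC a) (twB b) (twA a) \<alpha> \<beta> \<and>
     fiber_injective (twC a) (twB b) \<alpha> \<and> fiber_surjective (twB b) (twA a) \<beta>"

text \<open>Global sections of (+)_j O(tw!j): tuples of forms of the right degrees.\<close>
definition H0 :: "int list \<Rightarrow> (nat \<Rightarrow> 'k::zero mpoly) set" where
  "H0 tw = {f. (\<forall>j<length tw. homog (tw!j) (f j)) \<and> (\<forall>j\<ge>length tw. f j = 0)}"

definition apply_map :: "nat \<Rightarrow> nat \<Rightarrow> (nat \<Rightarrow> nat \<Rightarrow> 'k::field mpoly) \<Rightarrow> (nat \<Rightarrow> 'k mpoly) \<Rightarrow> (nat \<Rightarrow> 'k mpoly)" where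
  "apply_map nrows ncols M f = (\<lambda>i. if i < nrows then (\<Sum>j<ncols. M i j * f j) else 0)"

text \<open>The cohomology E = ker beta / im alpha has a nonzero global section: a global section of
  B killed by beta that is not the image of a global section of C
  (H^0(E) = ker H^0(beta) / im H^0(alpha), as H^1 of a sum of line bundles on P^3 vanishes).\<close>
definition cohomology_has_nonzero_section :: "int list \<Rightarrow> int list
     \<Rightarrow> (nat \<Rightarrow> nat \<Rightarrow> 'k::field mpoly) \<Rightarrow> (nat \<Rightarrow> nat \<Rightarrow> 'k mpoly) \<Rightarrow> bool" where
  "cohomology_has_nonzero_section a b \<alpha> \<beta> \<longleftrightarrow>
     (\<exists>f \<in> H0 (twB b). (\<forall>i. apply_map (length (twA a)) (length (twB b)) \<beta> f i = 0) \<and>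
        f \<notin> apply_map (length (twB b)) (length (twC a)) \<alpha> ` H0 (twC a))"

text \<open>Rank 2 bundle with c_1 = -1: stable iff no nonzero global sections.\<close>
definition cohomology_stable :: "int list \<Rightarrow> int list
     \<Rightarrow> (nat \<Rightarrow> nat \<Rightarrow> 'k::field mpoly) \<Rightarrow> (nat \<Rightarrow> nat \<Rightarrow> 'k mpoly) \<Rightarrow> bool" where
  "cohomology_stable a b \<alpha> \<beta> \<longleftrightarrow> \<not> cohomology_has_nonzero_section a b \<alpha> \<beta>"

definition prop5_pairs :: "(int list \<times> int list) set" where
  "prop5_pairs = {
     ([2,2,1,1], [2,0,0,0,0]),
     ([2,2,2], [2,1,0,0]),
     ([2,2,2,1], [2,1,1,0,0]),
     ([2,2,2,2], [3,1,0,0,0]),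
     ([2,2,2,2], [2,2,1,0,0]),
     ([2,2,2,2], [2,1,1,1,1]),
     ([3,2,2], [3,1,0,0]),
     ([3,3], [3,1,0]),
     ([3,3,2], [3,2,1,0]),
     ([3,3,2], [4,0,0,0])}"

end

theory Submission
  imports Defs
begin

text \<open>In each of the ten pairs, \<open>b\<^sub>1 \<ge> a\<^sub>i \<ge> 0\<close> for all \<open>i\<close>. The column of \<open>\<beta>\<close> belonging
  to the summand \<open>\<O>(b\<^sub>1)\<close> consists of forms of degree \<open>a\<^sub>i - b\<^sub>1 \<le> 0\<close>, i.e. of constants,
  which vanish by minimality. Hence the form \<open>x\<^sub>0\<close> to the power \<open>b\<^sub>1\<close>, placed in that summand,
  is a global section of \<open>ker \<beta>\<close>; it is not the image of a section of \<open>\<Oplus> \<O>(-a\<^sub>i-1)\<close>,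
  which has none. So the cohomology has a nonzero section and, having \<open>c\<^sub>1 = -1\<close>, is not
  stable.\<close>

lemma homog_neg_eq_0:
  assumes "d < 0" "homog d p"
  shows "p = 0"
proof (rule ccontr)
  assume "p \<noteq> 0"
  then obtain m where "m \<in> Poly_Mapping.keys p"
    by (metis all_not_in_conv keys_eq_empty)
  with assms(2) have "int (\<Sum>v<4. Poly_Mapping.lookup m v) = d"
    unfolding homog_def by blast
  with assms(1) show False by linarith
qed

lemma homog_0_is_const:
  assumes "homog 0 p"
  shows "is_const p"
  unfolding is_const_def
proof
  fix m assume "m \<in> Poly_Mapping.keys p"
  with assms have vars: "Poly_Mapping.keys m \<subseteq> {..<4}"
    and "int (\<Sum>v<4. Poly_Mapping.lookup m v) = 0"
    unfolding homog_def by blast+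
  then have deg: "(\<Sum>v<4. Poly_Mapping.lookup m v) = 0"
    by (simp only: of_nat_eq_0_iff)
  have "Poly_Mapping.lookup m v = 0" for v
  proof (cases "v < 4")
    case True
    then show ?thesis using deg by simp
  next
    case False
    then show ?thesis using vars by (meson in_keys_iff lessThan_iff subsetD)
  qed
  then have "m = 0" by (simp add: poly_mapping_eqI)
  then show "m \<in> {0}" by simp
qed

lemma homog_x0_power:
  assumes "0 \<le> d"
  shows "homog d (Poly_Mapping.single (Poly_Mapping.single (0::nat) (nat d)) (1::'k::zero_neq_one))"
  using assms unfolding homog_def by (auto simp: lookup_single when_def)

lemma H0_negative_twists:
  assumes "\<forall>t\<in>set tw. t < 0" "f \<in> H0 tw"
  shows "f j = 0"
proof (cases "j < length tw")
  case True
  then have "tw ! j < 0" using assms(1) nth_mem by blast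
  moreover have "homog (tw ! j) (f j)" using True assms(2) unfolding H0_def by blast
  ultimately show ?thesis by (rule homog_neg_eq_0)
next
  case False
  then show ?thesis using assms(2) unfolding H0_def by simp
qed

lemma minimal_map_entry_eq_0:
  assumes "sheaf_map src tgt M" "minimal_map src tgt M"
    and "i < length tgt" "j < length src" "tgt ! i \<le> src ! j"
  shows "M i j = 0"
proof -
  have homog: "homog (tgt ! i - src ! j) (M i j)"
    using assms(1,3,4) unfolding sheaf_map_def by blast
  show ?thesis
  proof (cases "tgt ! i = src ! j")
    case True
    with homog have "is_const (M i j)" by (simp add: homog_0_is_const)
    then show ?thesis using assms(2-4) unfolding minimal_map_def by blast
  next
    case False
    with assms(5) have "tgt ! i - src ! j < 0" by simp
    from this homog show ?thesis by (rule homog_neg_eq_0)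
  qed
qed

lemma apply_map_unit_vector:
  assumes "j < ncols"
  shows "apply_map nrows ncols M (\<lambda>k. if k = j then p else 0) i
    = (if i < nrows then M i j * p else 0)"
proof -
  have "(\<Sum>k<ncols. M i k * (if k = j then p else 0)) = (\<Sum>k<ncols. if k = j then M i j * p else 0)"
    by (rule sum.cong) simp_all
  also have "\<dots> = M i j * p"
    using assms by simp
  finally show ?thesis unfolding apply_map_def by simp
qed

lemma cohomology_has_nonzero_section_if_dominant_summand:
  fixes \<alpha> \<beta> :: "nat \<Rightarrow> nat \<Rightarrow> 'k::field mpoly"
  assumes sheaf: "sheaf_map (twB b) (twA a) \<beta>" and minimal: "minimal_map (twB b) (twA a) \<beta>"
    and j: "j < length b" and bj: "0 \<le> b ! j" and a: "\<forall>t\<in>set a. 0 \<le> t \<and> t \<le> b ! j"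
  shows "cohomology_has_nonzero_section a b \<alpha> \<beta>"
proof -
  define p :: "'k mpoly" where "p = Poly_Mapping.single (Poly_Mapping.single 0 (nat (b ! j))) 1"
  define f :: "nat \<Rightarrow> 'k mpoly" where "f = (\<lambda>k. if k = j then p else 0)"
  have jB: "j < length (twB b)" and twB_j: "twB b ! j = b ! j"
    using j unfolding twB_def by (simp_all add: nth_append)
  have "p \<noteq> 0" unfolding p_def by (metis lookup_single_eq lookup_zero zero_neq_one)
  then have "f j \<noteq> 0" unfolding f_def by simp
  have global_section: "f \<in> H0 (twB b)"
    using homog_x0_power[OF bj] jB twB_j unfolding H0_def f_def p_def by (auto simp: homog_def)
  have column_0: "\<beta> i j = 0" if "i < length a" for i
    using minimal_map_entry_eq_0[OF sheaf minimal] that jB twB_j a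
    unfolding twA_def by (simp add: nth_mem)
  have kernel: "\<forall>i. apply_map (length (twA a)) (length (twB b)) \<beta> f i = 0"
  proof
    fix i
    show "apply_map (length (twA a)) (length (twB b)) \<beta> f i = 0"
      using apply_map_unit_vector[OF jB, of "length a" \<beta> p i] column_0[of i]
      unfolding f_def twA_def by auto
  qed
  have "\<forall>t\<in>set (twC a). t < 0"
    using a unfolding twC_def by auto
  then have image_0: "apply_map (length (twB b)) (length (twC a)) \<alpha> g j = 0"
    if "g \<in> H0 (twC a)" for g
    using H0_negative_twists[OF _ that] unfolding apply_map_def by simp
  have not_image: "f \<notin> apply_map (length (twB b)) (length (twC a)) \<alpha> ` H0 (twC a)"
  proof
    assume "f \<in> apply_map (length (twB b)) (length (twC a)) \<alpha> ` H0 (twC a)"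
    then obtain g where "g \<in> H0 (twC a)" "f = apply_map (length (twB b)) (length (twC a)) \<alpha> g"
      by blast
    with image_0 \<open>f j \<noteq> 0\<close> show False by simp
  qed
  from global_section kernel not_image show ?thesis
    unfolding cohomology_has_nonzero_section_def by blast
qed

theorem proposition5:
  fixes \<alpha> \<beta> :: "nat \<Rightarrow> nat \<Rightarrow> 'k::field mpoly"
  assumes "alg_closed_field TYPE('k)"
    and "(a, b) \<in> prop5_pairs"
    and "minimal_monad a b \<alpha> \<beta>"
  shows "\<not> cohomology_stable a b \<alpha> \<beta>"
proof -
  have "sheaf_map (twB b) (twA a) \<beta>" "minimal_map (twB b) (twA a) \<beta>"
    using assms(3) unfolding minimal_monad_def by auto
  moreover have "0 < length b" "0 \<le> b ! 0" "\<forall>t\<in>set a. 0 \<le> t \<and> t \<le> b ! 0"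
    using assms(2) unfolding prop5_pairs_def by auto
  ultimately have "cohomology_has_nonzero_section a b \<alpha> \<beta>"
    by (rule cohomology_has_nonzero_section_if_dominant_summand)
  then show ?thesis
    unfolding cohomology_stable_def by simp
qed

end
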